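(* (Quantum Nash Equilibrium Theorem.) Every static quantum game, as defined in the context, has at least one Nash equilibrium: there exists a profile $\vec{\chi}=(\chi^1,\dots,\chi^N)\in\Omega_1\times\cdots\times\Omega_N$ such that for every player $k$ and every $\chi'\in\Omega_k$, $P_k(\vec{\chi}_{-k},\chi^k)\ge P_k(\vec{\chi}_{-k},\chi')$.
   Context: A static quantum game is defined as follows. There are $N$ players; each player receives $q$ qubits, and $n=2^q$. A referee prepares an initial state $\rho$, a density matrix on $(\mathbb{C}^n)^{\otimes N}$, sends the $k$-th $q$-qubit subsystem to player $k$; each player applies a trace-preserving completely positive map to their subsystem and returns it; the referee then measures with a POVM $\{M_m\}_{m=1}^L$ and awards player $k$ the amount $a^k_m\in\mathbb{R}$ on outcome $m$. Set $R^k=\sum_{m=1}^L a^k_m M_m^\dagger M_m$; player $k$'s payoff is $\mathrm{tr}(R^k\pi)$, where $\pi$ is the final state. Fix a basis $\{\tilde E_\alpha\}_{\alpha=1}^{4^q}$ of the space of $n\times n$ complex matrices. A trace-preserving completely positive map with Kraus operators $E_j=\sum_\alpha e_{j\alpha}\tilde E_\alpha$ is represented by its chi matrix $\chi_{\alpha\beta}=\sum_j e_{j\alpha}\overline{e_{j\beta}}$. Player $k$'s strategy set $\Omega_k$ is the set of all $4^q\times 4^q$ positive semidefinite Hermitian matrices $\chi$ satisfying $\sum_{\alpha,\beta}\overline{\chi_{\alpha\beta}}\,\tilde E_\alpha^\dagger\tilde E_\beta=I$ (i.e. chi matrices of all trace-preserving completely positive maps). For a profile $\vec\chi=(\chi^1,\dots,\chi^N)$,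 the payoff of player $k$ is $P_k(\vec\chi)=\sum \chi^1_{\alpha_1\beta_1}\cdots\chi^N_{\alpha_N\beta_N}A^k_{\alpha_1\beta_1\cdots\alpha_N\beta_N}$ (sum over all indices), where $A^k_{\alpha_1\beta_1\cdots\alpha_N\beta_N}=\mathrm{tr}\big[R^k(\tilde E_{\alpha_1}\otimes\cdots\otimes\tilde E_{\alpha_N})\rho(\tilde E_{\beta_1}^\dagger\otimes\cdots\otimes\tilde E_{\beta_N}^\dagger)\big]$; this equals $\mathrm{tr}(R^k\pi)$ and is real. Notation: $\vec\chi_{-k}$ denotes the profile with the $k$-th entry removed, and $(\vec\chi_{-k},\chi')$ the profile with the $k$-th entry replaced by $\chi'$. *)

theory Defs
  imports Complex_Main "Jordan_Normal_Form.Matrix"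
begin

(* All indices are 0-based: players k < N, outcomes m < L, basis indices alpha < 4^q. *)

definition adj :: "complex mat \<Rightarrow> complex mat" where
  "adj A = mat (dim_col A) (dim_row A) (\<lambda>(i,j). cnj (A $$ (j,i)))"

definition mtrace :: "complex mat \<Rightarrow> complex" where
  "mtrace A = (\<Sum>i<dim_row A. A $$ (i,i))"

definition hermitian :: "complex mat \<Rightarrow> bool" where
  "hermitian A \<longleftrightarrow> adj A = A"

definition psd :: "nat \<Rightarrow> complex mat \<Rightarrow> bool" where
  "psd d A \<longleftrightarrow> A \<in> carrier_mat d d \<and>
     (\<forall>x :: nat \<Rightarrow> complex. let s = (\<Sum>i<d. \<Sum>j<d. cnj (x i) * A $$ (i,j) * x j)
                                in s \<in> \<real> \<and> 0 \<le> Re s)"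

definition density_matrix :: "nat \<Rightarrow> complex mat \<Rightarrow> bool" where
  "density_matrix d \<rho> \<longleftrightarrow> psd d \<rho> \<and> mtrace \<rho> = 1"

(* digit of index i (0 \<le> i < n^N) belonging to subsystem k (k < N), subsystem 0 most significant *)
definition digit :: "nat \<Rightarrow> nat \<Rightarrow> nat \<Rightarrow> nat \<Rightarrow> nat" where
  "digit n N k i = (i div n ^ (N - 1 - k)) mod n"

definition tensor :: "nat \<Rightarrow> nat \<Rightarrow> (nat \<Rightarrow> complex mat) \<Rightarrow> complex mat" where
  "tensor n N X = mat (n ^ N) (n ^ N)
     (\<lambda>(i,j). \<Prod>k<N. X k $$ (digit n N k i, digit n N k j))"

definition povm :: "nat \<Rightarrow> nat \<Rightarrow> (nat \<Rightarrow> complex mat) \<Rightarrow> bool" where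
  "povm d L M \<longleftrightarrow> (\<forall>m<L. M m \<in> carrier_mat d d) \<and>
     mat d d (\<lambda>(i,j). \<Sum>m<L. (adj (M m) * M m) $$ (i,j)) = 1\<^sub>m d"

definition matrix_basis :: "nat \<Rightarrow> (nat \<Rightarrow> complex mat) \<Rightarrow> bool" where
  "matrix_basis n E \<longleftrightarrow> (\<forall>a<n^2. E a \<in> carrier_mat n n) \<and>
     (\<forall>c :: nat \<Rightarrow> complex.
        mat n n (\<lambda>(i,j). \<Sum>a<n^2. c a * E a $$ (i,j)) = 0\<^sub>m n n \<longrightarrow> (\<forall>a<n^2. c a = 0)) \<and>
     (\<forall>X \<in> carrier_mat n n. \<exists>c :: nat \<Rightarrow> complex.
        X = mat n n (\<lambda>(i,j). \<Sum>a<n^2. c a * E a $$ (i,j)))"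

definition payoff_op :: "nat \<Rightarrow> nat \<Rightarrow> (nat \<Rightarrow> complex mat) \<Rightarrow> (nat \<Rightarrow> nat \<Rightarrow> real) \<Rightarrow> nat \<Rightarrow> complex mat" where
  "payoff_op d L M a k = mat d d (\<lambda>(i,j). \<Sum>m<L. complex_of_real (a k m) * (adj (M m) * M m) $$ (i,j))"

(* strategy set Omega_k: chi matrices of all TPCP maps on q qubits w.r.t. basis E *)
definition strategies :: "nat \<Rightarrow> (nat \<Rightarrow> complex mat) \<Rightarrow> complex mat set" where
  "strategies q E = {\<chi>. \<chi> \<in> carrier_mat (4^q) (4^q) \<and> hermitian \<chi> \<and> psd (4^q) \<chi> \<and>
      mat (2^q) (2^q) (\<lambda>(i,j). \<Sum>\<alpha><4^q. \<Sum>\<beta><4^q. cnj (\<chi> $$ (\<alpha>,\<beta>)) * (adj (E \<alpha>) * E \<beta>) $$ (i,j))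
        = 1\<^sub>m (2^q)}"

definition coeffA :: "nat \<Rightarrow> nat \<Rightarrow> (nat \<Rightarrow> complex mat) \<Rightarrow> complex mat \<Rightarrow> nat \<Rightarrow> (nat \<Rightarrow> complex mat)
     \<Rightarrow> (nat \<Rightarrow> nat \<Rightarrow> real) \<Rightarrow> nat \<Rightarrow> (nat \<Rightarrow> nat) \<Rightarrow> (nat \<Rightarrow> nat) \<Rightarrow> complex" where
  "coeffA N q E \<rho> L M a k \<alpha> \<beta> =
     mtrace (payoff_op ((2^q)^N) L M a k * tensor (2^q) N (\<lambda>j. E (\<alpha> j)) * \<rho>
             * tensor (2^q) N (\<lambda>j. adj (E (\<beta> j))))"

(* P_k(chi_1,...,chi_N); the sum is real (as noted in the paper), we take its real part *)
definition payoff :: "nat \<Rightarrow> nat \<Rightarrow> (nat \<Rightarrow> complex mat) \<Rightarrow> complex mat \<Rightarrow> nat \<Rightarrow> (nat \<Rightarrow> complex mat)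
     \<Rightarrow> (nat \<Rightarrow> nat \<Rightarrow> real) \<Rightarrow> nat \<Rightarrow> (nat \<Rightarrow> complex mat) \<Rightarrow> real" where
  "payoff N q E \<rho> L M a k \<chi> = Re (\<Sum>\<alpha> \<in> PiE {..<N} (\<lambda>_. {..<4^q}). \<Sum>\<beta> \<in> PiE {..<N} (\<lambda>_. {..<4^q}).
      (\<Prod>j<N. \<chi> j $$ (\<alpha> j, \<beta> j)) * coeffA N q E \<rho> L M a k \<alpha> \<beta>)"

end

(*
  A chi matrix enters the payoff P_k linearly, so each payoff is multilinear in the profile and in
  particular affine in the player's own strategy, with a gradient depending continuously on the
  others' strategies.  Writing the N chi matrices as one real vector x, the strategy profiles form a
  compact convex set K: convex and closed because complete positivity and trace preservation are
  linear conditions, bounded because the trace-preservation condition bounds the Hermitian form of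
  chi on the vectors (conj (E_a (l,i)))_a, which span C^(4^q) since the E_a form a basis.  The map
  x |-> proj_K (x + grad x) is continuous, so by Brouwer's theorem it has a fixed point; the fixed
  point satisfies <grad x, y - x> <= 0 for every y in K, and for unilateral deviations this is the
  Nash condition.  Brouwer's theorem is needed in a dimension depending on N and q, so it is
  derived for coordinate balls from the non-contractibility of the sphere.
*)

theory Submission
  imports "HOL-Homology.Homology" Defs
begin

no_notation vec_lambda (binder \<open>\<chi>\<close> 10)

section \<open>Coordinate spaces and Brouwer's fixed point theorem\<close>

definition vanishing_outside :: "'i set \<Rightarrow> ('i \<Rightarrow> real) set" where
  "vanishing_outside I = {x. \<forall>i. i \<notin> I \<longrightarrow> x i = 0}"

definition dot :: "'i set \<Rightarrow> ('i \<Rightarrow> real) \<Rightarrow> ('i \<Rightarrow> real) \<Rightarrow> real" where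
  "dot I x y = (\<Sum>i\<in>I. x i * y i)"

definition convex_coords :: "('i \<Rightarrow> real) set \<Rightarrow> bool" where
  "convex_coords K \<longleftrightarrow>
     (\<forall>x\<in>K. \<forall>y\<in>K. \<forall>t. 0 \<le> t \<and> t \<le> 1 \<longrightarrow> (\<lambda>i. (1 - t) * x i + t * y i) \<in> K)"

lemma dot_self_nonneg: "0 \<le> dot I x x"
  unfolding dot_def by (simp add: sum_nonneg)

lemma dot_self_eq_0_iff: "finite I \<Longrightarrow> dot I x x = 0 \<longleftrightarrow> (\<forall>i\<in>I. x i = 0)"
  unfolding dot_def by (subst sum_nonneg_eq_0_iff) auto

lemma dot_scale_self: "dot I (\<lambda>i. c * x i) (\<lambda>i. c * x i) = c\<^sup>2 * dot I x x"
  unfolding dot_def by (simp add: sum_distrib_left algebra_simps power2_eq_square)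

lemma square_le_dot_self: "finite I \<Longrightarrow> j \<in> I \<Longrightarrow> (x j)\<^sup>2 \<le> dot I x x"
  unfolding dot_def power2_eq_square by (rule member_le_sum) auto

lemma continuous_on_dot [continuous_intros]:
  assumes "continuous_on S f" "continuous_on S g"
  shows "continuous_on S (\<lambda>s. dot I (f s) (g s))"
  unfolding dot_def
  by (intro continuous_on_sum continuous_on_mult
      continuous_on_product_then_coordinatewise[OF assms(1)]
      continuous_on_product_then_coordinatewise[OF assms(2)])

lemma continuous_on_coordinate [continuous_intros]:
  "continuous_on S (\<lambda>x. x i)"
  by (rule continuous_on_product_then_coordinatewise[OF continuous_on_id])

lemma continuous_on_if_const [continuous_intros]:
  "continuous_on S f \<Longrightarrow> continuous_on S g \<Longrightarrow> continuous_on S (\<lambda>x. if P then f x else g x)"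
  by (cases P) auto

lemma continuous_on_fun_diff [continuous_intros]:
  fixes f g :: "'a::topological_space \<Rightarrow> 'i \<Rightarrow> real"
  assumes "continuous_on S f" "continuous_on S g"
  shows "continuous_on S (\<lambda>s. f s - g s)"
  by (rule continuous_on_coordinatewise_then_product)
    (simp add: continuous_on_diff continuous_on_product_then_coordinatewise[OF assms(1)]
      continuous_on_product_then_coordinatewise[OF assms(2)])

definition unit_dir :: "'i set \<Rightarrow> ('i \<Rightarrow> real) \<Rightarrow> 'i \<Rightarrow> real" where
  "unit_dir I v = (\<lambda>i. v i / sqrt (dot I v v))"

lemma dot_unit_dir:
  assumes "dot I v v \<noteq> 0"
  shows "dot I (unit_dir I v) (unit_dir I v) = 1"
proof -
  have "dot I (unit_dir I v) (unit_dir I v) = dot I v v / (sqrt (dot I v v))\<^sup>2"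
    unfolding unit_dir_def dot_def by (simp add: sum_divide_distrib power2_eq_square)
  then show ?thesis
    using assms dot_self_nonneg[of I v] by simp
qed

lemma unit_dir_vanishing_outside:
  "v \<in> vanishing_outside I \<Longrightarrow> unit_dir J v \<in> vanishing_outside I"
  unfolding unit_dir_def vanishing_outside_def by simp

lemma unit_dir_unit: "dot I v v = 1 \<Longrightarrow> unit_dir I v = v"
  unfolding unit_dir_def by simp

lemma continuous_on_unit_dir:
  assumes "continuous_on S v" "\<And>s. s \<in> S \<Longrightarrow> dot I (v s) (v s) \<noteq> 0"
  shows "continuous_on S (\<lambda>s. unit_dir I (v s))"
  unfolding unit_dir_def
  using assms(2) dot_self_nonneg[of I]
  by (intro continuous_on_coordinatewise_then_product continuous_on_divide
      continuous_on_product_then_coordinatewise[OF assms(1)] continuous_on_dot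
      continuous_on_compose2[OF continuous_on_real_sqrt] assms(1)) auto

lemma compact_if_closed_bounded_coords:
  assumes "closed K" "K \<subseteq> vanishing_outside I" "\<And>x i. x \<in> K \<Longrightarrow> i \<in> I \<Longrightarrow> \<bar>x i\<bar> \<le> B"
  shows "compact K"
proof -
  define cube where "cube = Pi\<^sub>E UNIV (\<lambda>i. if i \<in> I then {-B..B} else {0::real})"
  have "compactin (product_topology (\<lambda>_. euclidean) UNIV) cube"
    unfolding cube_def by (subst compactin_PiE) (auto simp: compactin_euclidean_iff)
  then have "compact cube"
    by (simp add: euclidean_product_topology compactin_euclidean_iff)
  moreover have "K \<subseteq> cube"
  proof
    fix x
    assume "x \<in> K"
    then have "x i \<in> (if i \<in> I then {-B..B} else {0})" for i
      using assms(2) assms(3)[of x i] by (auto simp: vanishing_outside_def abs_le_iff)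
    then show "x \<in> cube"
      unfolding cube_def by blast
  qed
  ultimately show ?thesis
    using compact_Int_closed[OF _ assms(1)] by (metis inf.absorb2)
qed

lemma nsphere_eq_unit_sphere:
  "nsphere n = top_of_set {x \<in> vanishing_outside {..n}. dot {..n} x x = 1}"
  unfolding nsphere euclidean_product_topology vanishing_outside_def dot_def power2_eq_square
  by (rule arg_cong[where f = top_of_set]) auto

lemma no_nonvanishing_contraction_of_unit_sphere:
  fixes v :: "real \<times> (nat \<Rightarrow> real) \<Rightarrow> nat \<Rightarrow> real" and n :: nat
  defines "S \<equiv> {x \<in> vanishing_outside {..n}. dot {..n} x x = 1}"
  assumes cont: "continuous_on ({0..1} \<times> S) v"
    and vanishing: "\<And>p. p \<in> {0..1} \<times> S \<Longrightarrow> v p \<in> vanishing_outside {..n}"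
    and nonzero: "\<And>p. p \<in> {0..1} \<times> S \<Longrightarrow> dot {..n} (v p) (v p) \<noteq> 0"
    and start: "\<And>x. x \<in> S \<Longrightarrow> v (0, x) = x"
    and stop: "\<And>x. v (1, x) = c"
  shows False
proof -
  have "continuous_on ({0..1} \<times> S) (\<lambda>p. unit_dir {..n} (v p))"
    using cont nonzero by (rule continuous_on_unit_dir)
  moreover have "unit_dir {..n} (v p) \<in> S" if "p \<in> {0..1} \<times> S" for p
    using that vanishing nonzero by (simp add: S_def dot_unit_dir unit_dir_vanishing_outside)
  ultimately have "continuous_map (prod_topology (top_of_set {0..1}) (top_of_set S)) (top_of_set S)
      (\<lambda>p. unit_dir {..n} (v p))"
    by (simp add: continuous_map_subtopology_eu image_subset_iff)
  moreover have "unit_dir {..n} (v (0, x)) = id x" if "x \<in> S" for x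
    using that by (simp add: start S_def unit_dir_unit)
  ultimately have "homotopic_with_canon (\<lambda>x. True) S S id (\<lambda>x. unit_dir {..n} c)"
    using stop by (subst homotopic_with) (auto intro!: exI[of _ "\<lambda>p. unit_dir {..n} (v p)"])
  then have "contractible S"
    unfolding contractible_def by blast
  then show False
    using non_contractible_space_nsphere[of n] by (simp add: nsphere_eq_unit_sphere S_def)
qed

lemma unit_vector_ne_proper_contraction:
  assumes "dot I x x = 1" "dot I z z \<le> 1" "0 \<le> w" "w < 1"
  shows "x \<noteq> (\<lambda>i. w * z i)"
proof
  assume "x = (\<lambda>i. w * z i)"
  then have "1 = w\<^sup>2 * dot I z z"
    using assms(1) dot_scale_self[of I w z] by simp
  also have "\<dots> \<le> w\<^sup>2"
    using assms(2) by (intro mult_left_le) auto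
  also have "\<dots> < 1"
    using assms(3,4) by (simp add: abs_square_less_1)
  finally show False
    by simp
qed

lemma brouwer_coordinate_ball:
  fixes f :: "(nat \<Rightarrow> real) \<Rightarrow> nat \<Rightarrow> real" and n :: nat
  defines "D \<equiv> {x \<in> vanishing_outside {..n}. dot {..n} x x \<le> 1}"
  assumes contf: "continuous_on D f" and fD: "f ` D \<subseteq> D"
  shows "\<exists>x\<in>D. f x = x"
proof (rule ccontr)
  assume "\<not> ?thesis"
  then have no_fix: "y \<in> D \<Longrightarrow> f y \<noteq> y" for y
    by blast
  define S where "S = {x \<in> vanishing_outside {..n}. dot {..n} x x = 1}"
  \<comment> \<open>As t runs from 0 to 1, first f is pulled in (w from 0 to 1), then the sphere is shrunk to the
      origin (r from 1 to 0); v never vanishes since f has no fixed point and maps into the ball.\<close>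
  define r where "r t = min 1 (2 - 2 * t)" for t :: real
  define w where "w t = min 1 (2 * t)" for t :: real
  define y where "y p = (\<lambda>j. r (fst p) * snd p j)" for p :: "real \<times> (nat \<Rightarrow> real)"
  define v where "v p = (\<lambda>i. y p i - w (fst p) * f (y p) i)" for p
  have y_in_D: "y p \<in> D" if "p \<in> {0..1} \<times> S" for p
  proof -
    have "0 \<le> r (fst p)" "r (fst p) \<le> 1"
      using that by (auto simp: r_def)
    then have "(r (fst p))\<^sup>2 \<le> 1"
      by (simp add: power_le_one)
    then show ?thesis
      using that by (auto simp: y_def D_def S_def vanishing_outside_def dot_scale_self)
  qed
  have v_vanishing: "v p \<in> vanishing_outside {..n}" if "p \<in> {0..1} \<times> S" for p
    using y_in_D[OF that] fD by (auto simp: v_def D_def vanishing_outside_def)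
  have v_nonzero: "dot {..n} (v p) (v p) \<noteq> 0" if p: "p \<in> {0..1} \<times> S" for p
  proof
    assume "dot {..n} (v p) (v p) = 0"
    then have "v p = (\<lambda>_. 0)"
      using v_vanishing[OF p] by (auto simp: dot_self_eq_0_iff vanishing_outside_def)
    then have y_eq: "y p = (\<lambda>i. w (fst p) * f (y p) i)"
      by (auto simp: v_def fun_eq_iff)
    show False
    proof (cases "w (fst p) = 1")
      case True
      then show False
        using y_eq no_fix[OF y_in_D[OF p]] by simp
    next
      case False
      then have "y p = snd p" "0 \<le> w (fst p)" "w (fst p) < 1"
        using p by (auto simp: r_def w_def y_def)
      moreover have "dot {..n} (f (y p)) (f (y p)) \<le> 1"
        using fD y_in_D[OF p] by (auto simp: D_def)
      ultimately show False
        using unit_vector_ne_proper_contraction[of "{..n}" "snd p"] y_eq p by (auto simp: S_def)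
    qed
  qed
  have cont_y: "continuous_on ({0..1} \<times> S) y"
    unfolding y_def r_def
    by (intro continuous_intros
        continuous_on_product_then_coordinatewise[OF continuous_on_snd[OF continuous_on_id]])
  have cont_fy: "continuous_on ({0..1} \<times> S) (\<lambda>p. f (y p))"
    by (rule continuous_on_compose2[OF contf cont_y]) (use y_in_D in blast)
  have cont_w: "continuous_on ({0..1} \<times> S) (\<lambda>p. w (fst p))"
    unfolding w_def by (intro continuous_intros)
  have "continuous_on ({0..1} \<times> S) (\<lambda>p. v p i)" for i
    unfolding v_def
    by (intro continuous_on_diff continuous_on_mult cont_w
        continuous_on_product_then_coordinatewise[OF cont_y]
        continuous_on_product_then_coordinatewise[OF cont_fy])
  then have "continuous_on ({0..1} \<times> S) v"
    by (rule continuous_on_coordinatewise_then_product)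
  then show False
    using v_vanishing v_nonzero unfolding S_def
    by (rule no_nonvanishing_contraction_of_unit_sphere)
      (auto simp: v_def y_def r_def w_def)
qed

definition nearest :: "'i set \<Rightarrow> ('i \<Rightarrow> real) set \<Rightarrow> ('i \<Rightarrow> real) \<Rightarrow> 'i \<Rightarrow> real" where
  "nearest I K v = (SOME p. p \<in> K \<and> (\<forall>y\<in>K. dot I (v - p) (v - p) \<le> dot I (v - y) (v - y)))"

lemma nearest:
  assumes "compact K" "K \<noteq> {}"
  shows "nearest I K v \<in> K"
    and "y \<in> K \<Longrightarrow> dot I (v - nearest I K v) (v - nearest I K v) \<le> dot I (v - y) (v - y)"
proof -
  have "continuous_on K (\<lambda>y. dot I (v - y) (v - y))"
    by (intro continuous_intros continuous_on_const continuous_on_id)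
  then obtain p where "p \<in> K" "\<forall>y\<in>K. dot I (v - p) (v - p) \<le> dot I (v - y) (v - y)"
    using continuous_attains_inf[OF assms] by blast
  then have "nearest I K v \<in> K \<and>
      (\<forall>y\<in>K. dot I (v - nearest I K v) (v - nearest I K v) \<le> dot I (v - y) (v - y))"
    unfolding nearest_def by (rule someI[where x = p, OF conjI])
  then show "nearest I K v \<in> K"
    and "y \<in> K \<Longrightarrow> dot I (v - nearest I K v) (v - nearest I K v) \<le> dot I (v - y) (v - y)"
    by auto
qed

lemma nearest_variational:
  assumes K: "compact K" "K \<noteq> {}" "convex_coords K" and y: "y \<in> K"
  shows "dot I (v - nearest I K v) (y - nearest I K v) \<le> 0"
proof (rule ccontr)
  define p where "p = nearest I K v"
  define a where "a = dot I (v - p) (y - p)"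
  define b where "b = dot I (y - p) (y - p)"
  assume "\<not> ?thesis"
  then have "a > 0"
    by (simp add: a_def p_def)
  have "b \<ge> 0"
    unfolding b_def by (rule dot_self_nonneg)
  have key: "2 * t * a \<le> t\<^sup>2 * b" if "0 \<le> t" "t \<le> 1" for t
  proof -
    have "(\<lambda>i. (1 - t) * p i + t * y i) \<in> K"
      using K nearest(1)[OF K(1,2)] y that unfolding convex_coords_def p_def by blast
    from nearest(2)[OF K(1,2) this, of I v, folded p_def]
    have "dot I (v - p) (v - p) \<le>
        dot I (v - p) (v - p) - 2 * t * a + t\<^sup>2 * b"
      unfolding a_def b_def dot_def
      by (simp add: sum_subtractf sum.distrib sum_distrib_left power2_eq_square algebra_simps)
    then show ?thesis
      by simp
  qed
  show False
  proof (cases "b \<le> a")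
    case True
    then show False
      using key[of 1] \<open>a > 0\<close> by simp
  next
    case False
    with \<open>a > 0\<close> have "0 < a / b" "a / b \<le> 1"
      by auto
    from key[OF less_imp_le[OF this(1)] this(2)] False \<open>a > 0\<close> show False
      by (simp add: power2_eq_square field_simps)
  qed
qed

lemma nearest_self:
  assumes "finite I" "compact K" "K \<noteq> {}" "convex_coords K" "K \<subseteq> vanishing_outside I"
    and y: "y \<in> K"
  shows "nearest I K y = y"
proof -
  define p where "p = nearest I K y"
  have "p \<in> K"
    unfolding p_def using assms by (intro nearest)
  have "dot I (y - p) (y - p) \<le> 0"
    unfolding p_def using assms by (intro nearest_variational)
  then have "dot I (y - p) (y - p) = 0"
    using dot_self_nonneg[of I "y - p"] by linarith
  then have "\<forall>i\<in>I. p i = y i"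
    using assms(1) by (simp add: dot_self_eq_0_iff)
  moreover have "p \<in> vanishing_outside I" "y \<in> vanishing_outside I"
    using assms(5) \<open>p \<in> K\<close> y by auto
  ultimately have "p i = y i" for i
    unfolding vanishing_outside_def by (cases "i \<in> I") auto
  then show ?thesis
    unfolding p_def by blast
qed

lemma nearest_nonexpansive:
  fixes I :: "'i set" and v w :: "'i \<Rightarrow> real"
  assumes K: "compact K" "K \<noteq> {}" "convex_coords K"
  defines "d \<equiv> nearest I K v - nearest I K w"
  shows "dot I d d \<le> dot I (v - w) (v - w)"
proof -
  define p q where "p = nearest I K v" and "q = nearest I K w"
  have "p \<in> K" "q \<in> K"
    unfolding p_def q_def using K by (auto intro: nearest)
  have "dot I (v - p) (q - p) \<le> 0"
    unfolding p_def by (rule nearest_variational[OF K \<open>q \<in> K\<close>])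
  moreover have "dot I (w - q) (p - q) \<le> 0"
    unfolding q_def by (rule nearest_variational[OF K \<open>p \<in> K\<close>])
  moreover have "dot I d d = dot I (v - w) d + dot I (v - p) (q - p) + dot I (w - q) (p - q)"
    unfolding d_def p_def[symmetric] q_def[symmetric] dot_def
    by (simp add: sum.distrib[symmetric] algebra_simps)
  ultimately have "dot I d d \<le> dot I (v - w) d"
    by linarith
  then have "(dot I d d)\<^sup>2 \<le> (dot I (v - w) d)\<^sup>2"
    using dot_self_nonneg[of I d] by (intro power_mono) auto
  also have "\<dots> \<le> dot I (v - w) (v - w) * dot I d d"
    unfolding dot_def using Cauchy_Schwarz_ineq_sum[of "v - w" d I] by (simp add: power2_eq_square)
  finally have "(dot I d d)\<^sup>2 \<le> dot I (v - w) (v - w) * dot I d d" .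
  then show ?thesis
    using dot_self_nonneg[of I d] dot_self_nonneg[of I "v - w"]
    by (cases "dot I d d = 0") (auto simp: power2_eq_square)
qed

lemma continuous_on_nearest:
  fixes I :: "'i set"
  assumes I: "finite I" and K: "compact K" "K \<noteq> {}" "convex_coords K" "K \<subseteq> vanishing_outside I"
  shows "continuous_on UNIV (nearest I K)"
proof (rule continuous_on_coordinatewise_then_product)
  fix j
  show "continuous_on UNIV (\<lambda>v. nearest I K v j)"
  proof (cases "j \<in> I")
    case False
    have "nearest I K v \<in> vanishing_outside I" for v
      using nearest(1)[OF K(1,2)] K(4) by blast
    with False show ?thesis
      by (simp add: vanishing_outside_def)
  next
    case True
    show ?thesis
      unfolding continuous_on_def
    proof
      fix w :: "'i \<Rightarrow> real"
      have "continuous_on UNIV (\<lambda>v. sqrt (dot I (v - w) (v - w)))"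
        by (intro continuous_intros continuous_on_const continuous_on_id)
      then have "((\<lambda>v. sqrt (dot I (v - w) (v - w))) \<longlongrightarrow> sqrt (dot I (w - w) (w - w))) (at w)"
        unfolding continuous_on_def by simp
      then have lim: "((\<lambda>v. sqrt (dot I (v - w) (v - w))) \<longlongrightarrow> 0) (at w)"
        by (simp add: dot_def)
      have bound: "norm (nearest I K v j - nearest I K w j) \<le> sqrt (dot I (v - w) (v - w))" for v
      proof -
        have "(nearest I K v j - nearest I K w j)\<^sup>2 \<le> dot I (v - w) (v - w)"
          using square_le_dot_self[OF I True, of "nearest I K v - nearest I K w"]
            nearest_nonexpansive[OF K(1-3), of I v w] by simp
        then have "sqrt ((nearest I K v j - nearest I K w j)\<^sup>2) \<le> sqrt (dot I (v - w) (v - w))"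
          by (rule real_sqrt_le_mono)
        then show ?thesis
          by simp
      qed
      have "((\<lambda>v. nearest I K v j - nearest I K w j) \<longlongrightarrow> 0) (at w)"
        by (rule Lim_null_comparison[OF always_eventually lim]) (use bound in blast)
      then show "((\<lambda>v. nearest I K v j) \<longlongrightarrow> nearest I K w j) (at w within UNIV)"
        by (simp add: LIM_zero_cancel)
    qed
  qed
qed

lemma bounded_dot_self:
  assumes "compact K"
  obtains R where "R > 0" "\<And>y. y \<in> K \<Longrightarrow> dot I y y \<le> R\<^sup>2"
proof (cases "K = {}")
  case True
  then show ?thesis
    using that[of 1] by simp
next
  case False
  have "continuous_on K (\<lambda>y. dot I y y)"
    by (intro continuous_intros continuous_on_id)
  then obtain m where "\<And>y. y \<in> K \<Longrightarrow> dot I y y \<le> dot I m m"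
    using continuous_attains_sup[OF assms False] by blast
  moreover have "dot I m m \<le> (dot I m m + 1)\<^sup>2"
    using dot_self_nonneg[of I m] by (simp add: power2_eq_square algebra_simps)
  ultimately show ?thesis
    using that[of "dot I m m + 1"] dot_self_nonneg[of I m] by fastforce
qed

lemma coordinate_ball_embedding:
  fixes I :: "'i set"
  assumes I: "finite I" and K: "compact K"
  obtains n :: nat and to_ball :: "('i \<Rightarrow> real) \<Rightarrow> nat \<Rightarrow> real" and from_ball where
    "continuous_on UNIV to_ball" "continuous_on UNIV from_ball"
    "\<And>x. x \<in> K \<Longrightarrow> to_ball x \<in> {z \<in> vanishing_outside {..n}. dot {..n} z z \<le> 1}"
    "\<And>x. x \<in> vanishing_outside I \<Longrightarrow> from_ball (to_ball x) = x"
proof -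
  define n where "n = card I"
  obtain h where h: "bij_betw h {..<n} I"
    using ex_bij_betw_nat_finite[OF I] unfolding n_def atLeast0LessThan by blast
  define h' where "h' = inv_into {..<n} h"
  have h'_less: "h' i < n" and h_h': "h (h' i) = i" if "i \<in> I" for i
    using that h unfolding h'_def by (auto simp: bij_betw_inv_into_right bij_betw_def inv_into_into)
  obtain R where "R > 0" and R: "\<And>y. y \<in> K \<Longrightarrow> dot I y y \<le> R\<^sup>2"
    using bounded_dot_self[OF K] by blast
  define to_ball where "to_ball x = (\<lambda>j. if j < n then x (h j) / R else 0)" for x :: "'i \<Rightarrow> real"
  define from_ball where "from_ball z = (\<lambda>i. if i \<in> I then R * z (h' i) else 0)"
    for z :: "nat \<Rightarrow> real"
  have "continuous_on UNIV to_ball"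
    unfolding to_ball_def using \<open>R > 0\<close> by (intro continuous_intros) auto
  moreover have "continuous_on UNIV from_ball"
    unfolding from_ball_def by (intro continuous_intros)
  moreover have "to_ball x \<in> {z \<in> vanishing_outside {..n}. dot {..n} z z \<le> 1}" if "x \<in> K" for x
  proof -
    have "dot {..n} (to_ball x) (to_ball x) = (\<Sum>j<n. (x (h j))\<^sup>2) / R\<^sup>2"
      by (simp add: dot_def to_ball_def lessThan_Suc_atMost[symmetric] sum_divide_distrib
          power2_eq_square)
    also have "\<dots> = dot I x x / R\<^sup>2"
      using sum.reindex_bij_betw[OF h, of "\<lambda>i. (x i)\<^sup>2"] by (simp add: dot_def power2_eq_square)
    also have "\<dots> \<le> 1"
      using R[OF that] \<open>R > 0\<close> by simp
    finally show ?thesis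
      by (simp add: vanishing_outside_def to_ball_def)
  qed
  moreover have "from_ball (to_ball x) = x" if "x \<in> vanishing_outside I" for x
    using that \<open>R > 0\<close> h'_less h_h'
    by (auto simp: from_ball_def to_ball_def vanishing_outside_def fun_eq_iff)
  ultimately show thesis
    by (rule that)
qed

lemma brouwer_compact_convex_coords:
  fixes f :: "('i \<Rightarrow> real) \<Rightarrow> 'i \<Rightarrow> real"
  assumes I: "finite I" and K: "compact K" "K \<noteq> {}" "convex_coords K" "K \<subseteq> vanishing_outside I"
    and contf: "continuous_on K f" and fK: "f ` K \<subseteq> K"
  shows "\<exists>x\<in>K. f x = x"
proof -
  obtain n :: nat and to_ball :: "('i \<Rightarrow> real) \<Rightarrow> nat \<Rightarrow> real" and from_ball
    where cont_to: "continuous_on UNIV to_ball" and cont_from: "continuous_on UNIV from_ball"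
    and to_ball: "\<And>x. x \<in> K \<Longrightarrow> to_ball x \<in> {z \<in> vanishing_outside {..n}. dot {..n} z z \<le> 1}"
    and from_to_ball: "\<And>x. x \<in> vanishing_outside I \<Longrightarrow> from_ball (to_ball x) = x"
    by (rule coordinate_ball_embedding[OF I K(1)]) blast
  let ?D = "{z \<in> vanishing_outside {..n}. dot {..n} z z \<le> 1}"
  \<comment> \<open>K is a retract of the coordinate ball, via the nearest point map\<close>
  define g where "g z = to_ball (f (nearest I K (from_ball z)))" for z
  from continuous_on_compose2[OF continuous_on_nearest[OF I K] cont_from subset_UNIV]
  have "continuous_on UNIV (\<lambda>z. f (nearest I K (from_ball z)))"
    by (rule continuous_on_compose2[OF contf]) (use nearest(1)[OF K(1,2)] in blast)
  from continuous_on_compose2[OF cont_to this subset_UNIV]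
  have "continuous_on ?D g"
    unfolding g_def by (rule continuous_on_subset) simp
  moreover have "g ` ?D \<subseteq> ?D"
    unfolding g_def using to_ball fK nearest(1)[OF K(1,2)] by blast
  ultimately obtain z where "g z = z"
    using brouwer_coordinate_ball[of n g] by blast
  define x where "x = f (nearest I K (from_ball z))"
  have "x \<in> K"
    unfolding x_def using fK nearest(1)[OF K(1,2)] by blast
  then have "from_ball (to_ball x) = x"
    using K(4) from_to_ball by blast
  moreover have "to_ball x = z"
    using \<open>g z = z\<close> unfolding g_def x_def by simp
  ultimately have "nearest I K (from_ball z) = x"
    using nearest_self[OF I K \<open>x \<in> K\<close>] by simp
  with \<open>x \<in> K\<close> show ?thesis
    unfolding x_def by metis
qed

section \<open>Games whose payoffs are affine in the own strategy\<close>

definition deviate :: "('i \<Rightarrow> nat) \<Rightarrow> nat \<Rightarrow> ('i \<Rightarrow> real) \<Rightarrow> ('i \<Rightarrow> real) \<Rightarrow> 'i \<Rightarrow> real" where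
  "deviate player k x y = (\<lambda>c. if player c = k then y c else x c)"

lemma equilibrium_of_affine_game:
  fixes u :: "nat \<Rightarrow> ('i \<Rightarrow> real) \<Rightarrow> real" and grad :: "('i \<Rightarrow> real) \<Rightarrow> 'i \<Rightarrow> real"
  assumes I: "finite I" and K: "compact K" "K \<noteq> {}" "convex_coords K" "K \<subseteq> vanishing_outside I"
    and cont_grad: "continuous_on K grad"
    and deviate_in: "\<And>k x y. x \<in> K \<Longrightarrow> y \<in> K \<Longrightarrow> deviate player k x y \<in> K"
    and affine: "\<And>k x y. k < N \<Longrightarrow> x \<in> K \<Longrightarrow> y \<in> K \<Longrightarrow>
      u k (deviate player k x y) - u k x = dot {c \<in> I. player c = k} (grad x) (y - x)"
  shows "\<exists>x\<in>K. \<forall>k<N. \<forall>y\<in>K. u k (deviate player k x y) \<le> u k x"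
proof -
  have "continuous_on K (\<lambda>x c. x c + grad x c)"
    by (rule continuous_on_coordinatewise_then_product)
      (simp add: continuous_on_add continuous_on_coordinate
        continuous_on_product_then_coordinatewise[OF cont_grad])
  then have "continuous_on K (\<lambda>x. nearest I K (\<lambda>c. x c + grad x c))"
    by (rule continuous_on_compose2[OF continuous_on_nearest[OF I K] _ subset_UNIV])
  moreover have "(\<lambda>x. nearest I K (\<lambda>c. x c + grad x c)) ` K \<subseteq> K"
    using nearest(1)[OF K(1,2)] by blast
  ultimately obtain x where "x \<in> K" and fixed: "nearest I K (\<lambda>c. x c + grad x c) = x"
    using brouwer_compact_convex_coords[OF I K] by blast
  have variational: "dot I (grad x) (z - x) \<le> 0" if "z \<in> K" for z
    using nearest_variational[OF K(1-3) that, of I "\<lambda>c. x c + grad x c"]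
    by (simp add: fixed fun_diff_def)
  show ?thesis
  proof (intro bexI[OF _ \<open>x \<in> K\<close>] allI impI ballI)
    fix k y
    assume "k < N" "y \<in> K"
    have "dot {c \<in> I. player c = k} (grad x) (y - x) = dot I (grad x) (deviate player k x y - x)"
      unfolding dot_def deviate_def using I by (auto simp: sum.inter_filter intro!: sum.cong)
    also have "\<dots> \<le> 0"
      by (rule variational[OF deviate_in[OF \<open>x \<in> K\<close> \<open>y \<in> K\<close>]])
    finally show "u k (deviate player k x y) \<le> u k x"
      using affine[OF \<open>k < N\<close> \<open>x \<in> K\<close> \<open>y \<in> K\<close>] by simp
  qed
qed

section \<open>Chi matrices and strategy profiles\<close>

type_synonym coord = "nat \<times> nat \<times> nat \<times> bool"

definition coords :: "nat \<Rightarrow> nat \<Rightarrow> coord set" where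
  "coords N d = {..<N} \<times> {..<d} \<times> {..<d} \<times> UNIV"

definition entry :: "(coord \<Rightarrow> real) \<Rightarrow> nat \<Rightarrow> nat \<Rightarrow> nat \<Rightarrow> complex" where
  "entry x k a b = Complex (x (k, a, b, True)) (x (k, a, b, False))"

definition decode :: "nat \<Rightarrow> (coord \<Rightarrow> real) \<Rightarrow> nat \<Rightarrow> complex mat" where
  "decode d x k = mat d d (\<lambda>(a, b). entry x k a b)"

definition encode :: "nat \<Rightarrow> nat \<Rightarrow> (nat \<Rightarrow> complex mat) \<Rightarrow> coord \<Rightarrow> real" where
  "encode N d \<chi> = (\<lambda>(k, a, b, t).
     if k < N \<and> a < d \<and> b < d then (if t then Re else Im) (\<chi> k $$ (a, b)) else 0)"

lemma finite_coords: "finite (coords N d)"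
  unfolding coords_def by simp

lemma decode_carrier [simp]: "decode d x k \<in> carrier_mat d d"
  unfolding decode_def by simp

lemma index_decode [simp]: "a < d \<Longrightarrow> b < d \<Longrightarrow> decode d x k $$ (a, b) = entry x k a b"
  unfolding decode_def by simp

lemma entry_encode: "k < N \<Longrightarrow> a < d \<Longrightarrow> b < d \<Longrightarrow> entry (encode N d \<chi>) k a b = \<chi> k $$ (a, b)"
  unfolding entry_def encode_def by (simp add: complex_eq_iff)

lemma decode_encode: "k < N \<Longrightarrow> \<chi> k \<in> carrier_mat d d \<Longrightarrow> decode d (encode N d \<chi>) k = \<chi> k"
  by (rule eq_matI) (auto simp: entry_encode decode_def)

lemma encode_vanishing_outside: "encode N d \<chi> \<in> vanishing_outside (coords N d)"
  unfolding encode_def coords_def vanishing_outside_def by auto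

lemma entry_deviate: "entry (deviate fst k x y) j = (if j = k then entry y j else entry x j)"
  unfolding entry_def deviate_def by auto

lemma entry_convex_combination:
  "entry (\<lambda>c. (1 - t) * x c + t * y c) k a b =
    of_real (1 - t) * entry x k a b + of_real t * entry y k a b"
  unfolding entry_def by (simp add: complex_eq_iff)

lemma continuous_on_entry [continuous_intros]: "continuous_on S (\<lambda>x. entry x k a b)"
  unfolding entry_def by (intro continuous_intros)

definition quad_form :: "nat \<Rightarrow> (nat \<Rightarrow> nat \<Rightarrow> complex) \<Rightarrow> (nat \<Rightarrow> complex) \<Rightarrow> complex" where
  "quad_form d F y = (\<Sum>i<d. \<Sum>j<d. cnj (y i) * F i j * y j)"

definition psd_form :: "nat \<Rightarrow> (nat \<Rightarrow> nat \<Rightarrow> complex) \<Rightarrow> bool" where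
  "psd_form d F \<longleftrightarrow> (\<forall>y. Im (quad_form d F y) = 0 \<and> 0 \<le> Re (quad_form d F y))"

definition tp_sum :: "nat \<Rightarrow> (nat \<Rightarrow> complex mat) \<Rightarrow> (nat \<Rightarrow> nat \<Rightarrow> complex) \<Rightarrow> nat \<Rightarrow> nat \<Rightarrow> complex" where
  "tp_sum d E F i j = (\<Sum>\<alpha><d. \<Sum>\<beta><d. cnj (F \<alpha> \<beta>) * (adj (E \<alpha>) * E \<beta>) $$ (i, j))"

definition tpcp_chi :: "nat \<Rightarrow> (nat \<Rightarrow> complex mat) \<Rightarrow> (nat \<Rightarrow> nat \<Rightarrow> complex) \<Rightarrow> bool" where
  "tpcp_chi q E F \<longleftrightarrow>
     (\<forall>a<4^q. \<forall>b<4^q. F a b = cnj (F b a)) \<and>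
     psd_form (4^q) F \<and>
     (\<forall>i<2^q. \<forall>j<2^q. tp_sum (4^q) E F i j = (if i = j then 1 else 0))"

lemma hermitian_iff:
  assumes "X \<in> carrier_mat d d"
  shows "hermitian X \<longleftrightarrow> (\<forall>a<d. \<forall>b<d. X $$ (a, b) = cnj (X $$ (b, a)))"
proof
  assume "hermitian X"
  show "\<forall>a<d. \<forall>b<d. X $$ (a, b) = cnj (X $$ (b, a))"
  proof (intro allI impI)
    fix a b
    assume "a < d" "b < d"
    with assms have "adj X $$ (a, b) = cnj (X $$ (b, a))"
      by (simp add: adj_def)
    with \<open>hermitian X\<close> show "X $$ (a, b) = cnj (X $$ (b, a))"
      unfolding hermitian_def by simp
  qed
next
  assume H: "\<forall>a<d. \<forall>b<d. X $$ (a, b) = cnj (X $$ (b, a))"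
  show "hermitian X"
    unfolding hermitian_def
  proof (rule eq_matI)
    fix a b
    assume "a < dim_row X" "b < dim_col X"
    with assms have "a < d" "b < d"
      by auto
    with assms have "adj X $$ (a, b) = cnj (X $$ (b, a))"
      by (simp add: adj_def)
    also have "\<dots> = X $$ (a, b)"
      using H[rule_format, OF \<open>a < d\<close> \<open>b < d\<close>] by simp
    finally show "adj X $$ (a, b) = X $$ (a, b)" .
  qed (use assms in \<open>simp_all add: adj_def\<close>)
qed

lemma strategies_iff_tpcp_chi:
  assumes "X \<in> carrier_mat (4^q) (4^q)"
  shows "X \<in> strategies q E \<longleftrightarrow> tpcp_chi q E (\<lambda>a b. X $$ (a, b))"
proof -
  have "hermitian X \<longleftrightarrow> (\<forall>a<4^q. \<forall>b<4^q. X $$ (a, b) = cnj (X $$ (b, a)))"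
    using assms by (rule hermitian_iff)
  moreover have "psd (4^q) X \<longleftrightarrow> psd_form (4^q) (\<lambda>a b. X $$ (a, b))"
    using assms unfolding psd_def psd_form_def quad_form_def Let_def complex_is_Real_iff by simp
  moreover have "mat (2^q) (2^q) (\<lambda>(i, j). tp_sum (4^q) E (\<lambda>a b. X $$ (a, b)) i j) = 1\<^sub>m (2^q) \<longleftrightarrow>
      (\<forall>i<2^q. \<forall>j<2^q. tp_sum (4^q) E (\<lambda>a b. X $$ (a, b)) i j = (if i = j then 1 else 0))"
    by (simp add: mat_eq_iff)
  ultimately show ?thesis
    using assms unfolding strategies_def tpcp_chi_def by (simp add: tp_sum_def)
qed

lemma tpcp_chi_cong:
  assumes "\<And>a b. a < 4^q \<Longrightarrow> b < 4^q \<Longrightarrow> F a b = G a b"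
  shows "tpcp_chi q E F \<longleftrightarrow> tpcp_chi q E G"
  using assms unfolding tpcp_chi_def psd_form_def quad_form_def tp_sum_def by simp

lemma decode_in_strategies_iff: "decode (4^q) x k \<in> strategies q E \<longleftrightarrow> tpcp_chi q E (entry x k)"
  by (simp add: strategies_iff_tpcp_chi cong: tpcp_chi_cong)

lemma quad_form_linear:
  "quad_form d (\<lambda>a b. c * F a b + e * G a b) y = c * quad_form d F y + e * quad_form d G y"
proof -
  have "cnj (y i) * (c * F i j + e * G i j) * y j =
      c * (cnj (y i) * F i j * y j) + e * (cnj (y i) * G i j * y j)" for i j
    by (simp add: algebra_simps)
  then show ?thesis
    unfolding quad_form_def by (simp only: sum.distrib sum_distrib_left)
qed

lemma tp_sum_linear:
  fixes c e :: real
  shows "tp_sum d E (\<lambda>a b. of_real c * F a b + of_real e * G a b) i j =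
    of_real c * tp_sum d E F i j + of_real e * tp_sum d E G i j"
proof -
  have "cnj (of_real c * F \<alpha> \<beta> + of_real e * G \<alpha> \<beta>) * (adj (E \<alpha>) * E \<beta>) $$ (i, j) =
      of_real c * (cnj (F \<alpha> \<beta>) * (adj (E \<alpha>) * E \<beta>) $$ (i, j)) +
      of_real e * (cnj (G \<alpha> \<beta>) * (adj (E \<alpha>) * E \<beta>) $$ (i, j))" for \<alpha> \<beta>
    by (simp add: algebra_simps)
  then show ?thesis
    unfolding tp_sum_def by (simp only: sum.distrib sum_distrib_left)
qed

lemma tpcp_chi_convex:
  assumes "tpcp_chi q E F" "tpcp_chi q E G" "0 \<le> t" "t \<le> 1"
  shows "tpcp_chi q E (\<lambda>a b. of_real (1 - t) * F a b + of_real t * G a b)"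
  unfolding tpcp_chi_def psd_form_def quad_form_linear tp_sum_linear
proof (intro conjI allI impI)
  fix a b :: nat
  assume "a < 4^q" "b < 4^q"
  then have "F a b = cnj (F b a)" "G a b = cnj (G b a)"
    using assms(1,2) unfolding tpcp_chi_def by blast+
  then show "of_real (1 - t) * F a b + of_real t * G a b =
      cnj (of_real (1 - t) * F b a + of_real t * G b a)"
    by simp
next
  fix y
  have "Im (quad_form (4^q) F y) = 0" "0 \<le> Re (quad_form (4^q) F y)"
    "Im (quad_form (4^q) G y) = 0" "0 \<le> Re (quad_form (4^q) G y)"
    using assms(1,2) unfolding tpcp_chi_def psd_form_def by blast+
  with assms(3,4)
  show "Im (of_real (1 - t) * quad_form (4^q) F y + of_real t * quad_form (4^q) G y) = 0"
    and "0 \<le> Re (of_real (1 - t) * quad_form (4^q) F y + of_real t * quad_form (4^q) G y)"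
    by simp_all
next
  fix i j :: nat
  assume "i < 2^q" "j < 2^q"
  then have "tp_sum (4^q) E F i j = (if i = j then 1 else 0)"
    and "tp_sum (4^q) E G i j = (if i = j then 1 else 0)"
    using assms(1,2) unfolding tpcp_chi_def by blast+
  then show "of_real (1 - t) * tp_sum (4^q) E F i j + of_real t * tp_sum (4^q) E G i j =
      (if i = j then 1 else 0)"
    by (simp add: algebra_simps)
qed

lemma quad_form_support:
  assumes "S \<subseteq> {..<d}" "\<And>i. i \<notin> S \<Longrightarrow> y i = 0"
  shows "quad_form d F y = (\<Sum>i\<in>S. \<Sum>j\<in>S. cnj (y i) * F i j * y j)"
  unfolding quad_form_def using assms finite_subset[OF assms(1)]
  by (intro sum.mono_neutral_cong_right) (auto intro!: sum.mono_neutral_cong_right)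

lemma quad_form_two_point:
  assumes "a < d" "b < d" "a \<noteq> b"
  shows "quad_form d F (\<lambda>i. if i = a then s else if i = b then t else 0) =
    cnj s * F a a * s + cnj s * F a b * t + cnj t * F b a * s + cnj t * F b b * t"
  using assms by (subst quad_form_support[where S = "{a, b}"]) auto

lemma psd_form_entry_bound:
  assumes F: "psd_form d F" and H: "\<forall>a<d. \<forall>b<d. F a b = cnj (F b a)"
    and diag: "\<forall>g<d. Re (F g g) \<le> B" and ab: "a < d" "b < d"
  shows "\<bar>Re (F a b)\<bar> \<le> B \<and> \<bar>Im (F a b)\<bar> \<le> B"
proof (cases "a = b")
  case True
  have "quad_form d F (\<lambda>i. if i = a then 1 else 0) = F a a"
    using ab by (subst quad_form_support[where S = "{a}"]) auto
  then have "Im (F a a) = 0" "0 \<le> Re (F a a)"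
    using F unfolding psd_form_def by metis+
  moreover have "Re (F a a) \<le> B"
    using diag ab by simp
  ultimately show ?thesis
    using True by simp
next
  case False
  have "F b a = cnj (F a b)"
    using H ab by blast
  have "0 \<le> Re (quad_form d F (\<lambda>i. if i = a then s else if i = b then t else 0))" for s t
    using F unfolding psd_form_def by blast
  note two_point = this[unfolded quad_form_two_point[OF ab False] \<open>F b a = cnj (F a b)\<close>]
  from two_point[of 1 1] two_point[of 1 "-1"] two_point[of 1 "\<i>"] two_point[of 1 "-\<i>"]
    diag[rule_format, OF ab(1)] diag[rule_format, OF ab(2)]
  show ?thesis
    unfolding abs_le_iff by simp
qed

lemma quad_form_scale: "quad_form d F (\<lambda>i. c * y i) = cnj c * c * quad_form d F y"
  unfolding quad_form_def by (simp add: sum_distrib_left algebra_simps)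

lemma quad_form_cong: "(\<And>i. i < d \<Longrightarrow> y i = z i) \<Longrightarrow> quad_form d F y = quad_form d F z"
  unfolding quad_form_def by simp

lemma quad_form_parallelogram:
  "quad_form d F (\<lambda>i. y i + z i) + quad_form d F (\<lambda>i. y i - z i) =
    2 * quad_form d F y + 2 * quad_form d F z"
proof -
  have "cnj (y i + z i) * F i j * (y j + z j) + cnj (y i - z i) * F i j * (y j - z j) =
      2 * (cnj (y i) * F i j * y j) + 2 * (cnj (z i) * F i j * z j)" for i j
    by (simp add: algebra_simps)
  then show ?thesis
    unfolding quad_form_def by (simp only: sum.distrib[symmetric] sum_distrib_left)
qed

lemma quad_form_sum_le:
  assumes F: "psd_form d F" and "finite R"
  shows "Re (quad_form d F (\<lambda>i. \<Sum>r\<in>R. Y r i)) \<le> 2 ^ card R * (\<Sum>r\<in>R. Re (quad_form d F (Y r)))"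
  using \<open>finite R\<close>
proof (induction R rule: finite_induct)
  case empty
  then show ?case
    by (simp add: quad_form_def)
next
  case (insert r R)
  define S where "S i = (\<Sum>r\<in>R. Y r i)" for i
  have nonneg: "0 \<le> Re (quad_form d F y)" for y
    using F unfolding psd_form_def by blast
  have "Re (quad_form d F (\<lambda>i. Y r i + S i))
      \<le> Re (quad_form d F (\<lambda>i. Y r i + S i)) + Re (quad_form d F (\<lambda>i. Y r i - S i))"
    using nonneg by simp
  also have "\<dots> = 2 * Re (quad_form d F (Y r)) + 2 * Re (quad_form d F S)"
    using arg_cong[OF quad_form_parallelogram[of d F "Y r" S], of Re] by simp
  also have "\<dots> \<le> 2 * Re (quad_form d F (Y r)) + 2 * (2 ^ card R * (\<Sum>r\<in>R. Re (quad_form d F (Y r))))"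
    using insert.IH unfolding S_def by simp
  also have "\<dots> \<le> 2 ^ card (insert r R) * (\<Sum>r\<in>insert r R. Re (quad_form d F (Y r)))"
  proof -
    have "(2::real) \<le> 2 ^ Suc (card R)"
      by simp
    then have "2 * Re (quad_form d F (Y r)) \<le> 2 ^ Suc (card R) * Re (quad_form d F (Y r))"
      using nonneg by (rule mult_right_mono)
    then show ?thesis
      using insert by (simp add: algebra_simps)
  qed
  finally show ?case
    using insert by (simp add: S_def)
qed

lemma matrix_basis_dual:
  assumes basis: "matrix_basis n E"
  obtains c :: "nat \<times> nat \<Rightarrow> nat \<Rightarrow> complex" where
    "\<And>a g. a < n\<^sup>2 \<Longrightarrow> g < n\<^sup>2 \<Longrightarrow> (\<Sum>p\<in>{..<n} \<times> {..<n}. c p g * E a $$ p) = (if a = g then 1 else 0)"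
proof -
  let ?R = "{..<n} \<times> {..<n}"
  define Z where "Z p = mat n n (\<lambda>q. if q = p then 1 else (0::complex))" for p
  have "\<forall>X \<in> carrier_mat n n. \<exists>c. X = mat n n (\<lambda>(i, j). \<Sum>g<n\<^sup>2. c g * E g $$ (i, j))"
    using basis unfolding matrix_basis_def by blast
  moreover have "Z p \<in> carrier_mat n n" for p
    unfolding Z_def by simp
  ultimately have "\<forall>p. \<exists>c. Z p = mat n n (\<lambda>(i, j). \<Sum>g<n\<^sup>2. c g * E g $$ (i, j))"
    by blast
  from choice[OF this]
  obtain c where c: "\<And>p. Z p = mat n n (\<lambda>(i, j). \<Sum>g<n\<^sup>2. c p g * E g $$ (i, j))"
    by blast
  have c_entry: "(\<Sum>g<n\<^sup>2. c p g * E g $$ q) = (if q = p then 1 else 0)" if q: "q \<in> ?R" for p q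
  proof -
    obtain i j where "q = (i, j)" "i < n" "j < n"
      using q by blast
    then show ?thesis
      using arg_cong[OF c[of p], of "\<lambda>X. X $$ q"] by (simp add: Z_def)
  qed
  show thesis
  proof (rule that)
    fix a g
    assume a: "a < n\<^sup>2" and g: "g < n\<^sup>2"
    define e where "e h = (\<Sum>p\<in>?R. c p h * E a $$ p) - (if a = h then 1 else 0)" for h
    have "(\<Sum>h<n\<^sup>2. e h * E h $$ q) = 0" if q: "q \<in> ?R" for q
    proof -
      have "(\<Sum>h<n\<^sup>2. \<Sum>p\<in>?R. c p h * E a $$ p * E h $$ q) =
          (\<Sum>p\<in>?R. E a $$ p * (\<Sum>h<n\<^sup>2. c p h * E h $$ q))"
        by (subst sum.swap) (simp add: sum_distrib_left mult_ac)
      also have "\<dots> = E a $$ q"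
        using q by (simp add: c_entry if_distrib[of "\<lambda>x. _ * x"] sum.delta' cong: if_cong)
      finally show ?thesis
        using a unfolding e_def by (simp add: left_diff_distrib sum_subtractf sum_distrib_right
            if_distrib[of "\<lambda>x. x * _"] sum.delta cong: if_cong)
    qed
    then have "mat n n (\<lambda>(i, j). \<Sum>h<n\<^sup>2. e h * E h $$ (i, j)) = 0\<^sub>m n n"
      by (intro eq_matI) auto
    then have "e g = 0"
      using basis g unfolding matrix_basis_def by blast
    then show "(\<Sum>p\<in>?R. c p g * E a $$ p) = (if a = g then 1 else 0)"
      unfolding e_def by simp
  qed
qed

lemma quad_form_tp_sum_diagonal:
  assumes carrier: "\<And>\<alpha>. \<alpha> < d \<Longrightarrow> E \<alpha> \<in> carrier_mat n n" and i: "i < n"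
  shows "(\<Sum>l<n. quad_form d F (\<lambda>\<alpha>. cnj (E \<alpha> $$ (l, i)))) = cnj (tp_sum d E F i i)"
proof -
  have "(adj (E \<alpha>) * E \<beta>) $$ (i, i) = (\<Sum>l<n. cnj (E \<alpha> $$ (l, i)) * E \<beta> $$ (l, i))"
    if "\<alpha> < d" "\<beta> < d" for \<alpha> \<beta>
    using carrier[OF that(1)] carrier[OF that(2)] i
    by (simp add: adj_def scalar_prod_def atLeast0LessThan)
  then have "cnj (tp_sum d E F i i) =
      (\<Sum>\<alpha><d. \<Sum>\<beta><d. \<Sum>l<n. E \<alpha> $$ (l, i) * F \<alpha> \<beta> * cnj (E \<beta> $$ (l, i)))"
    unfolding tp_sum_def by (simp add: sum_distrib_left algebra_simps)
  also have "\<dots> = (\<Sum>l<n. \<Sum>\<alpha><d. \<Sum>\<beta><d. E \<alpha> $$ (l, i) * F \<alpha> \<beta> * cnj (E \<beta> $$ (l, i)))"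
    by (subst sum.swap) (simp add: sum.swap[of _ "{..<d}" "{..<n}"])
  finally show ?thesis
    unfolding quad_form_def by simp
qed

lemma matrix_basis_carrier: "matrix_basis n E \<Longrightarrow> a < n\<^sup>2 \<Longrightarrow> E a \<in> carrier_mat n n"
  unfolding matrix_basis_def by blast

lemma four_power_eq: "(4::nat) ^ q = (2 ^ q)\<^sup>2"
  by (simp add: power2_eq_square flip: power_mult_distrib)

lemma quad_form_conj_entries_le_1:
  assumes carrier: "\<And>\<alpha>. \<alpha> < d \<Longrightarrow> E \<alpha> \<in> carrier_mat n n" and F: "psd_form d F"
    and tp: "tp_sum d E F i i = 1" and "l < n" "i < n"
  shows "Re (quad_form d F (\<lambda>\<alpha>. cnj (E \<alpha> $$ (l, i)))) \<le> 1"
proof -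
  have "(\<Sum>l'<n. quad_form d F (\<lambda>\<alpha>. cnj (E \<alpha> $$ (l', i)))) = 1"
    using quad_form_tp_sum_diagonal[of d E n i F, OF carrier \<open>i < n\<close>] tp by simp
  then have "(\<Sum>l'<n. Re (quad_form d F (\<lambda>\<alpha>. cnj (E \<alpha> $$ (l', i))))) = 1"
    by (metis Re_sum one_complex.simps(1))
  moreover have "Re (quad_form d F (\<lambda>\<alpha>. cnj (E \<alpha> $$ (l, i)))) \<le>
      (\<Sum>l'<n. Re (quad_form d F (\<lambda>\<alpha>. cnj (E \<alpha> $$ (l', i)))))"
    using F \<open>l < n\<close> unfolding psd_form_def by (intro member_le_sum) auto
  ultimately show ?thesis
    by simp
qed

lemma psd_form_diagonal_bounded:
  assumes basis: "matrix_basis n E"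
  obtains B where "\<And>F g. psd_form (n\<^sup>2) F \<Longrightarrow> (\<And>i. i < n \<Longrightarrow> tp_sum (n\<^sup>2) E F i i = 1) \<Longrightarrow>
    g < n\<^sup>2 \<Longrightarrow> Re (F g g) \<le> B"
proof -
  let ?R = "{..<n} \<times> {..<n}"
  obtain c where c: "\<And>a g. a < n\<^sup>2 \<Longrightarrow> g < n\<^sup>2 \<Longrightarrow>
      (\<Sum>p\<in>?R. c p g * E a $$ p) = (if a = g then 1 else 0)"
    using matrix_basis_dual[OF basis] by blast
  define w where "w p = (\<lambda>\<alpha>. cnj (E \<alpha> $$ p))" for p
  define B where "B = 2 ^ card ?R * (\<Sum>g<n\<^sup>2. \<Sum>p\<in>?R. (cmod (c p g))\<^sup>2)"
  have "Re (F g g) \<le> B"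
    if F: "psd_form (n\<^sup>2) F" and tp: "\<And>i. i < n \<Longrightarrow> tp_sum (n\<^sup>2) E F i i = 1" and g: "g < n\<^sup>2"
    for F g
  proof -
    \<comment> \<open>the g-th unit vector is a combination of the vectors w p, on which the form is at most 1\<close>
    define Y where "Y p = (\<lambda>\<alpha>. cnj (c p g) * w p \<alpha>)" for p
    have "F g g = quad_form (n\<^sup>2) F (\<lambda>\<alpha>. if \<alpha> = g then 1 else 0)"
      using g by (subst quad_form_support[where S = "{g}"]) auto
    also have "\<dots> = quad_form (n\<^sup>2) F (\<lambda>\<alpha>. \<Sum>p\<in>?R. Y p \<alpha>)"
    proof (rule quad_form_cong)
      fix \<alpha>
      assume "\<alpha> < n\<^sup>2"
      have "(\<Sum>p\<in>?R. Y p \<alpha>) = cnj (\<Sum>p\<in>?R. c p g * E \<alpha> $$ p)"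
        unfolding Y_def w_def by (simp add: cnj_sum)
      then show "(if \<alpha> = g then 1 else 0) = (\<Sum>p\<in>?R. Y p \<alpha>)"
        using c[OF \<open>\<alpha> < n\<^sup>2\<close> g] by simp
    qed
    finally have "Re (F g g) \<le> 2 ^ card ?R * (\<Sum>p\<in>?R. Re (quad_form (n\<^sup>2) F (Y p)))"
      using quad_form_sum_le[OF F, of ?R Y] by simp
    also have "\<dots> = 2 ^ card ?R * (\<Sum>p\<in>?R. (cmod (c p g))\<^sup>2 * Re (quad_form (n\<^sup>2) F (w p)))"
      unfolding Y_def quad_form_scale by (simp flip: complex_norm_square)
    also have "\<dots> \<le> 2 ^ card ?R * (\<Sum>p\<in>?R. (cmod (c p g))\<^sup>2)"
      using quad_form_conj_entries_le_1[OF matrix_basis_carrier[OF basis] F tp] unfolding w_def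
      by (intro mult_left_mono sum_mono mult_left_le) auto
    also have "\<dots> \<le> B"
      unfolding B_def using g
      by (intro mult_left_mono member_le_sum[where f = "\<lambda>g. \<Sum>p\<in>?R. (cmod (c p g))\<^sup>2"])
        (auto intro: sum_nonneg)
    finally show ?thesis .
  qed
  then show thesis
    by (rule that)
qed

lemma tpcp_chi_bounded:
  assumes "matrix_basis (2^q) E"
  obtains B where
    "\<And>F a b. tpcp_chi q E F \<Longrightarrow> a < 4^q \<Longrightarrow> b < 4^q \<Longrightarrow> \<bar>Re (F a b)\<bar> \<le> B \<and> \<bar>Im (F a b)\<bar> \<le> B"
proof -
  obtain B where diag: "\<And>F g. psd_form ((2^q)\<^sup>2) F \<Longrightarrow> (\<And>i. i < 2^q \<Longrightarrow> tp_sum ((2^q)\<^sup>2) E F i i = 1) \<Longrightarrow>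
      g < (2^q)\<^sup>2 \<Longrightarrow> Re (F g g) \<le> B"
    using psd_form_diagonal_bounded[OF assms] by blast
  have "\<bar>Re (F a b)\<bar> \<le> B \<and> \<bar>Im (F a b)\<bar> \<le> B"
    if chi: "tpcp_chi q E F" and ab: "a < 4^q" "b < 4^q" for F a b
  proof -
    have herm: "\<forall>a<(2^q)\<^sup>2. \<forall>b<(2^q)\<^sup>2. F a b = cnj (F b a)" and psd: "psd_form ((2^q)\<^sup>2) F"
      using chi unfolding tpcp_chi_def four_power_eq by blast+
    have "tp_sum ((2^q)\<^sup>2) E F i i = 1" if "i < 2^q" for i
      using chi that unfolding tpcp_chi_def four_power_eq by simp
    from diag[OF psd this] show ?thesis
      using ab unfolding four_power_eq by (intro psd_form_entry_bound[OF psd herm]) auto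
  qed
  then show thesis
    by (rule that)
qed

lemma psd_form_rank_one: "psd_form d (\<lambda>\<alpha> \<beta>. c \<alpha> * cnj (c \<beta>))"
  unfolding psd_form_def
proof
  fix y
  define z where "z = (\<Sum>i<d. cnj (y i) * c i)"
  have "quad_form d (\<lambda>\<alpha> \<beta>. c \<alpha> * cnj (c \<beta>)) y = z * cnj z"
    unfolding quad_form_def z_def by (simp add: sum_product algebra_simps)
  also have "\<dots> = of_real ((cmod z)\<^sup>2)"
    by (rule complex_norm_square[symmetric])
  finally show "Im (quad_form d (\<lambda>\<alpha> \<beta>. c \<alpha> * cnj (c \<beta>)) y) = 0 \<and>
      0 \<le> Re (quad_form d (\<lambda>\<alpha> \<beta>. c \<alpha> * cnj (c \<beta>)) y)"
    by simp
qed

lemma identity_channel_tpcp_chi: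
  assumes basis: "matrix_basis (2^q) E"
  obtains F where "tpcp_chi q E F"
proof -
  define n :: nat where "n = 2^q"
  obtain c where "1\<^sub>m n = mat n n (\<lambda>(i, j). \<Sum>\<alpha><n\<^sup>2. c \<alpha> * E \<alpha> $$ (i, j))"
    using basis unfolding matrix_basis_def n_def by (meson one_carrier_mat)
  then have c: "(\<Sum>\<alpha><n\<^sup>2. c \<alpha> * E \<alpha> $$ (l, i)) = (if l = i then 1 else 0)" if "l < n" "i < n" for l i
    using that by (metis (no_types, lifting) case_prod_conv index_mat(1) index_one_mat(1))
  \<comment> \<open>the chi matrix of the identity map, whose only Kraus operator is the identity\<close>
  define F where "F \<alpha> \<beta> = c \<alpha> * cnj (c \<beta>)" for \<alpha> \<beta>
  have "tp_sum (n\<^sup>2) E F i j = (if i = j then 1 else 0)" if "i < n" "j < n" for i j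
  proof -
    have "(adj (E \<alpha>) * E \<beta>) $$ (i, j) = (\<Sum>l<n. cnj (E \<alpha> $$ (l, i)) * E \<beta> $$ (l, j))"
      if "\<alpha> < n\<^sup>2" "\<beta> < n\<^sup>2" for \<alpha> \<beta>
      using matrix_basis_carrier[OF basis[folded n_def] that(1)]
        matrix_basis_carrier[OF basis[folded n_def] that(2)] \<open>i < n\<close> \<open>j < n\<close>
      by (simp add: adj_def scalar_prod_def atLeast0LessThan)
    then have "tp_sum (n\<^sup>2) E F i j =
        (\<Sum>\<alpha><n\<^sup>2. \<Sum>\<beta><n\<^sup>2. \<Sum>l<n. cnj (c \<alpha> * E \<alpha> $$ (l, i)) * (c \<beta> * E \<beta> $$ (l, j)))"
      unfolding tp_sum_def F_def by (simp add: sum_distrib_left algebra_simps)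
    also have "\<dots> = (\<Sum>l<n. cnj (\<Sum>\<alpha><n\<^sup>2. c \<alpha> * E \<alpha> $$ (l, i)) * (\<Sum>\<beta><n\<^sup>2. c \<beta> * E \<beta> $$ (l, j)))"
      by (simp add: cnj_sum sum_product sum.swap[of _ "{..<n}"])
    also have "\<dots> = (if i = j then 1 else 0)"
      using that by (simp add: c if_distrib[of "\<lambda>x. _ * x"] sum.delta cong: if_cong)
    finally show ?thesis .
  qed
  then have "tpcp_chi q E F"
    using psd_form_rank_one[of "n\<^sup>2" c] unfolding tpcp_chi_def F_def n_def four_power_eq by auto
  then show thesis
    by (rule that)
qed

lemma continuous_on_quad_form_entry [continuous_intros]:
  "continuous_on S (\<lambda>x. quad_form d (entry x k) y)"
  unfolding quad_form_def by (intro continuous_intros)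

lemma continuous_on_tp_sum_entry [continuous_intros]:
  "continuous_on S (\<lambda>x. tp_sum d E (entry x k) i j)"
  unfolding tp_sum_def by (intro continuous_intros)

definition strategy_profiles :: "nat \<Rightarrow> nat \<Rightarrow> (nat \<Rightarrow> complex mat) \<Rightarrow> (coord \<Rightarrow> real) set" where
  "strategy_profiles N q E =
     {x \<in> vanishing_outside (coords N (4^q)). \<forall>k<N. tpcp_chi q E (entry x k)}"

lemma closed_strategy_profiles: "closed (strategy_profiles N q E)"
  unfolding strategy_profiles_def vanishing_outside_def tpcp_chi_def psd_form_def mem_Collect_eq
  by (intro closed_Collect_conj closed_Collect_all closed_Collect_imp open_Collect_const
      closed_Collect_eq closed_Collect_le continuous_intros)

lemma compact_strategy_profiles:
  assumes "matrix_basis (2^q) E"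
  shows "compact (strategy_profiles N q E)"
proof -
  obtain B where B: "\<And>F a b. tpcp_chi q E F \<Longrightarrow> a < 4^q \<Longrightarrow> b < 4^q \<Longrightarrow>
      \<bar>Re (F a b)\<bar> \<le> B \<and> \<bar>Im (F a b)\<bar> \<le> B"
    using tpcp_chi_bounded[OF assms] by blast
  have bounded: "\<bar>x c\<bar> \<le> B" if "x \<in> strategy_profiles N q E" "c \<in> coords N (4^q)" for x c
  proof -
    obtain k a b t where c: "c = (k, a, b, t)" "k < N" "a < 4^q" "b < 4^q"
      using \<open>c \<in> coords N (4^q)\<close> unfolding coords_def by blast
    with that have "tpcp_chi q E (entry x k)"
      unfolding strategy_profiles_def by blast
    from B[OF this c(3,4)] show ?thesis
      using c by (cases t) (simp_all add: entry_def)
  qed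
  show ?thesis
  proof (rule compact_if_closed_bounded_coords[OF closed_strategy_profiles])
    show "strategy_profiles N q E \<subseteq> vanishing_outside (coords N (4^q))"
      unfolding strategy_profiles_def by blast
  qed (fact bounded)
qed

lemma convex_strategy_profiles: "convex_coords (strategy_profiles N q E)"
  unfolding convex_coords_def
proof (intro ballI allI impI)
  fix x y and t :: real
  assume x: "x \<in> strategy_profiles N q E" and y: "y \<in> strategy_profiles N q E"
    and t: "0 \<le> t \<and> t \<le> 1"
  have "tpcp_chi q E (entry (\<lambda>c. (1 - t) * x c + t * y c) k)" if "k < N" for k
    using tpcp_chi_convex[of q E "entry x k" "entry y k" t] x y t that
    unfolding strategy_profiles_def entry_convex_combination by blast
  with x y show "(\<lambda>c. (1 - t) * x c + t * y c) \<in> strategy_profiles N q E"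
    unfolding strategy_profiles_def vanishing_outside_def by auto
qed

lemma strategy_profiles_nonempty:
  assumes "matrix_basis (2^q) E"
  shows "strategy_profiles N q E \<noteq> {}"
proof -
  obtain F where F: "tpcp_chi q E F"
    using identity_channel_tpcp_chi[OF assms] by blast
  define x where "x = encode N (4^q) (\<lambda>_. mat (4^q) (4^q) (\<lambda>(a, b). F a b))"
  have "tpcp_chi q E (entry x k)" if "k < N" for k
    using F that by (simp add: x_def entry_encode cong: tpcp_chi_cong)
  then have "x \<in> strategy_profiles N q E"
    unfolding strategy_profiles_def x_def by (simp add: encode_vanishing_outside)
  then show ?thesis
    by blast
qed

lemma deviate_in_strategy_profiles:
  assumes "x \<in> strategy_profiles N q E" "y \<in> strategy_profiles N q E"
  shows "deviate fst k x y \<in> strategy_profiles N q E"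
proof -
  have "tpcp_chi q E (entry (deviate fst k x y) j)" if "j < N" for j
    using assms that unfolding strategy_profiles_def by (simp add: entry_deviate)
  moreover have "deviate fst k x y \<in> vanishing_outside (coords N (4^q))"
    using assms unfolding strategy_profiles_def vanishing_outside_def deviate_def by auto
  ultimately show ?thesis
    unfolding strategy_profiles_def by blast
qed

section \<open>Multilinear payoffs\<close>

type_synonym coefficients = "nat \<Rightarrow> (nat \<Rightarrow> nat) \<Rightarrow> (nat \<Rightarrow> nat) \<Rightarrow> complex"

definition indices :: "nat \<Rightarrow> nat \<Rightarrow> (nat \<Rightarrow> nat) set" where
  "indices N d = Pi\<^sub>E {..<N} (\<lambda>_. {..<d})"

definition profile_payoff ::
    "nat \<Rightarrow> nat \<Rightarrow> coefficients \<Rightarrow> nat \<Rightarrow> (coord \<Rightarrow> real) \<Rightarrow> real" where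
  "profile_payoff N d A k x =
     Re (\<Sum>\<alpha>\<in>indices N d. \<Sum>\<beta>\<in>indices N d. (\<Prod>j<N. entry x j (\<alpha> j) (\<beta> j)) * A k \<alpha> \<beta>)"

definition partial_payoff ::
    "nat \<Rightarrow> nat \<Rightarrow> coefficients \<Rightarrow> nat \<Rightarrow> (coord \<Rightarrow> real) \<Rightarrow> nat \<Rightarrow> nat \<Rightarrow> complex" where
  "partial_payoff N d A k x a b =
     (\<Sum>\<alpha>\<in>{\<alpha> \<in> indices N d. \<alpha> k = a}. \<Sum>\<beta>\<in>{\<beta> \<in> indices N d. \<beta> k = b}.
        (\<Prod>j\<in>{..<N} - {k}. entry x j (\<alpha> j) (\<beta> j)) * A k \<alpha> \<beta>)"

text \<open>Since Re (w * (u + i v)) = Re w * u + Re (w * i) * v, the coordinates of the gradient of the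
  real part of a complex-linear function are Re w and Re (w * i).\<close>

definition payoff_gradient ::
    "nat \<Rightarrow> nat \<Rightarrow> coefficients \<Rightarrow> (coord \<Rightarrow> real) \<Rightarrow> coord \<Rightarrow> real" where
  "payoff_gradient N d A x =
     (\<lambda>(k, a, b, t). Re (partial_payoff N d A k x a b * (if t then 1 else \<i>)))"

lemma payoff_eq_profile_payoff:
  assumes "\<And>j a b. j < N \<Longrightarrow> a < 4^q \<Longrightarrow> b < 4^q \<Longrightarrow> \<chi> j $$ (a, b) = entry x j a b"
  shows "payoff N q E \<rho> L M p k \<chi> = profile_payoff N (4^q) (coeffA N q E \<rho> L M p) k x"
proof -
  have "(\<Prod>j<N. \<chi> j $$ (\<alpha> j, \<beta> j)) = (\<Prod>j<N. entry x j (\<alpha> j) (\<beta> j))"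
    if "\<alpha> \<in> indices N (4^q)" "\<beta> \<in> indices N (4^q)" for \<alpha> \<beta>
    using that assms by (intro prod.cong) (auto simp: indices_def PiE_iff)
  then show ?thesis
    unfolding payoff_def profile_payoff_def indices_def[symmetric] by simp
qed

lemma sum_indices_by_component:
  assumes "k < N"
  shows "(\<Sum>\<alpha>\<in>indices N d. f (\<alpha> k) \<alpha>) = (\<Sum>a<d. \<Sum>\<alpha>\<in>{\<alpha> \<in> indices N d. \<alpha> k = a}. f a \<alpha>)"
proof -
  have "(\<Sum>\<alpha>\<in>indices N d. f (\<alpha> k) \<alpha>) = (\<Sum>a<d. \<Sum>\<alpha>\<in>{\<alpha> \<in> indices N d. \<alpha> k = a}. f (\<alpha> k) \<alpha>)"
    using assms by (intro sum.group[symmetric]) (auto simp: indices_def PiE_iff finite_PiE)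
  then show ?thesis
    by simp
qed

lemma sum_indices_pair_by_component:
  fixes g :: "nat \<Rightarrow> nat \<Rightarrow> 'a::semiring_0"
  assumes k: "k < N"
  shows "(\<Sum>\<alpha>\<in>indices N d. \<Sum>\<beta>\<in>indices N d. g (\<alpha> k) (\<beta> k) * R \<alpha> \<beta>) =
    (\<Sum>a<d. \<Sum>b<d. g a b *
      (\<Sum>\<alpha>\<in>{\<alpha> \<in> indices N d. \<alpha> k = a}. \<Sum>\<beta>\<in>{\<beta> \<in> indices N d. \<beta> k = b}. R \<alpha> \<beta>))"
proof -
  let ?P = "indices N d"
  have "(\<Sum>\<alpha>\<in>?P. \<Sum>\<beta>\<in>?P. g (\<alpha> k) (\<beta> k) * R \<alpha> \<beta>) =
      (\<Sum>a<d. \<Sum>\<alpha>\<in>{\<alpha> \<in> ?P. \<alpha> k = a}. \<Sum>\<beta>\<in>?P. g a (\<beta> k) * R \<alpha> \<beta>)"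
    by (rule sum_indices_by_component[OF k, where f = "\<lambda>a \<alpha>. \<Sum>\<beta>\<in>?P. g a (\<beta> k) * R \<alpha> \<beta>"])
  also have "\<dots> = (\<Sum>a<d. \<Sum>\<alpha>\<in>{\<alpha> \<in> ?P. \<alpha> k = a}. \<Sum>b<d. \<Sum>\<beta>\<in>{\<beta> \<in> ?P. \<beta> k = b}. g a b * R \<alpha> \<beta>)"
    by (intro sum.cong refl sum_indices_by_component[OF k, where f = "\<lambda>b \<beta>. g _ b * R _ \<beta>"])
  also have "\<dots> = (\<Sum>a<d. \<Sum>b<d. g a b *
      (\<Sum>\<alpha>\<in>{\<alpha> \<in> ?P. \<alpha> k = a}. \<Sum>\<beta>\<in>{\<beta> \<in> ?P. \<beta> k = b}. R \<alpha> \<beta>))"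
  proof (intro sum.cong refl)
    fix a
    have "(\<Sum>\<alpha>\<in>{\<alpha> \<in> ?P. \<alpha> k = a}. \<Sum>b<d. \<Sum>\<beta>\<in>{\<beta> \<in> ?P. \<beta> k = b}. g a b * R \<alpha> \<beta>) =
        (\<Sum>b<d. \<Sum>\<alpha>\<in>{\<alpha> \<in> ?P. \<alpha> k = a}. \<Sum>\<beta>\<in>{\<beta> \<in> ?P. \<beta> k = b}. g a b * R \<alpha> \<beta>)"
      by (rule sum.swap)
    then show "(\<Sum>\<alpha>\<in>{\<alpha> \<in> ?P. \<alpha> k = a}. \<Sum>b<d. \<Sum>\<beta>\<in>{\<beta> \<in> ?P. \<beta> k = b}. g a b * R \<alpha> \<beta>) =
        (\<Sum>b<d. g a b * (\<Sum>\<alpha>\<in>{\<alpha> \<in> ?P. \<alpha> k = a}. \<Sum>\<beta>\<in>{\<beta> \<in> ?P. \<beta> k = b}. R \<alpha> \<beta>))"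
      by (simp add: sum_distrib_left)
  qed
  finally show ?thesis .
qed

lemma profile_payoff_deviate:
  assumes k: "k < N"
  shows "profile_payoff N d A k (deviate fst k x y) - profile_payoff N d A k x =
    dot {c \<in> coords N d. fst c = k} (payoff_gradient N d A x) (y - x)"
proof -
  define P where "P = indices N d"
  define R where "R \<alpha> \<beta> = (\<Prod>j\<in>{..<N} - {k}. entry x j (\<alpha> j) (\<beta> j)) * A k \<alpha> \<beta>" for \<alpha> \<beta>
  define \<delta> where "\<delta> a b = entry y k a b - entry x k a b" for a b
  have split: "(\<Prod>j<N. entry z j (\<alpha> j) (\<beta> j)) * A k \<alpha> \<beta> = entry z k (\<alpha> k) (\<beta> k) * R \<alpha> \<beta>"
    if "\<And>j. j \<noteq> k \<Longrightarrow> entry z j = entry x j" for z \<alpha> \<beta>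
  proof -
    have "(\<Prod>j\<in>{..<N} - {k}. entry z j (\<alpha> j) (\<beta> j)) = (\<Prod>j\<in>{..<N} - {k}. entry x j (\<alpha> j) (\<beta> j))"
      using that by (intro prod.cong) auto
    then show ?thesis
      using k unfolding R_def by (simp add: prod.remove[of "{..<N}" k] mult.assoc)
  qed
  have "(\<Sum>\<alpha>\<in>P. \<Sum>\<beta>\<in>P. (\<Prod>j<N. entry (deviate fst k x y) j (\<alpha> j) (\<beta> j)) * A k \<alpha> \<beta>) -
      (\<Sum>\<alpha>\<in>P. \<Sum>\<beta>\<in>P. (\<Prod>j<N. entry x j (\<alpha> j) (\<beta> j)) * A k \<alpha> \<beta>) =
      (\<Sum>\<alpha>\<in>P. \<Sum>\<beta>\<in>P. \<delta> (\<alpha> k) (\<beta> k) * R \<alpha> \<beta>)"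
    using split[of "deviate fst k x y"] split[of x]
    by (simp add: entry_deviate \<delta>_def left_diff_distrib sum_subtractf)
  also have "\<dots> = (\<Sum>a<d. \<Sum>b<d. \<delta> a b * partial_payoff N d A k x a b)"
    unfolding P_def partial_payoff_def R_def[symmetric]
    by (rule sum_indices_pair_by_component[OF k])
  finally have "profile_payoff N d A k (deviate fst k x y) - profile_payoff N d A k x =
      Re (\<Sum>a<d. \<Sum>b<d. \<delta> a b * partial_payoff N d A k x a b)"
    unfolding profile_payoff_def P_def by (simp only: minus_complex.sel(1)[symmetric])
  also have "\<dots> = (\<Sum>a<d. \<Sum>b<d. Re (\<delta> a b * partial_payoff N d A k x a b))"
    by (simp only: Re_sum)
  also have "\<dots> = dot {c \<in> coords N d. fst c = k} (payoff_gradient N d A x) (y - x)"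
  proof -
    have "{c \<in> coords N d. fst c = k} = {k} \<times> {..<d} \<times> {..<d} \<times> UNIV"
      using k by (auto simp: coords_def)
    then show ?thesis
      unfolding dot_def payoff_gradient_def \<delta>_def entry_def
      by (simp add: sum.cartesian_product' UNIV_bool algebra_simps)
  qed
  finally show ?thesis .
qed

lemma continuous_on_payoff_gradient: "continuous_on S (payoff_gradient N d A)"
proof (rule continuous_on_coordinatewise_then_product)
  fix c :: coord
  obtain k a b t where c: "c = (k, a, b, t)"
    by (cases c)
  show "continuous_on S (\<lambda>x. payoff_gradient N d A x c)"
    unfolding c payoff_gradient_def partial_payoff_def prod.case
    by (intro continuous_on_Re continuous_on_mult continuous_on_const continuous_on_sum
        continuous_on_prod continuous_on_entry)
qed

lemma strategy_profiles_equilibrium: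
  assumes "matrix_basis (2^q) E"
  obtains x where "x \<in> strategy_profiles N q E"
    and "\<And>k y. k < N \<Longrightarrow> y \<in> strategy_profiles N q E \<Longrightarrow>
      profile_payoff N (4^q) A k (deviate fst k x y) \<le> profile_payoff N (4^q) A k x"
proof -
  have "\<exists>x\<in>strategy_profiles N q E. \<forall>k<N. \<forall>y\<in>strategy_profiles N q E.
      profile_payoff N (4^q) A k (deviate fst k x y) \<le> profile_payoff N (4^q) A k x"
  proof (rule equilibrium_of_affine_game[where I = "coords N (4^q)"
        and grad = "payoff_gradient N (4^q) A"])
    show "strategy_profiles N q E \<subseteq> vanishing_outside (coords N (4^q))"
      unfolding strategy_profiles_def by blast
  qed (simp_all add: finite_coords compact_strategy_profiles[OF assms]
      strategy_profiles_nonempty[OF assms] convex_strategy_profiles continuous_on_payoff_gradient deviate_in_strategy_profiles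
      profile_payoff_deviate)
  with that show thesis
    by blast
qed

lemma decode_strategy_profile:
  "x \<in> strategy_profiles N q E \<Longrightarrow> k < N \<Longrightarrow> decode (4^q) x k \<in> strategies q E"
  unfolding strategy_profiles_def by (simp add: decode_in_strategies_iff)

lemma encode_strategy_profile:
  assumes "\<chi> \<in> strategies q E"
  shows "encode N (4^q) (\<lambda>_. \<chi>) \<in> strategy_profiles N q E"
proof -
  have "\<chi> \<in> carrier_mat (4^q) (4^q)"
    using assms unfolding strategies_def by blast
  with assms show ?thesis
    unfolding strategy_profiles_def
    by (simp add: encode_vanishing_outside decode_encode flip: decode_in_strategies_iff)
qed

lemma payoff_decode:
  "payoff N q E \<rho> L M p k (decode (4^q) x) = profile_payoff N (4^q) (coeffA N q E \<rho> L M p) k x"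
  by (rule payoff_eq_profile_payoff) simp

lemma payoff_decode_update:
  assumes "k < N"
  shows "payoff N q E \<rho> L M p k ((decode (4^q) x)(k := \<chi>)) =
    profile_payoff N (4^q) (coeffA N q E \<rho> L M p) k (deviate fst k x (encode N (4^q) (\<lambda>_. \<chi>)))"
  using assms by (intro payoff_eq_profile_payoff) (simp add: entry_deviate entry_encode)

theorem theorem1:
  fixes N q L :: nat
    and \<rho> :: "complex mat"
    and M :: "nat \<Rightarrow> complex mat"
    and a :: "nat \<Rightarrow> nat \<Rightarrow> real"
    and E :: "nat \<Rightarrow> complex mat"
  assumes "N \<ge> 1"
    and "density_matrix ((2^q)^N) \<rho>"
    and "povm ((2^q)^N) L M"
    and "matrix_basis (2^q) E"
  shows "\<exists>\<chi> :: nat \<Rightarrow> complex mat.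
           (\<forall>k<N. \<chi> k \<in> strategies q E) \<and>
           (\<forall>k<N. \<forall>\<chi>' \<in> strategies q E.
              payoff N q E \<rho> L M a k \<chi> \<ge> payoff N q E \<rho> L M a k (\<chi>(k := \<chi>')))"
proof -
  \<comment> \<open>Multilinearity holds for any initial state and measurement.\<close>
  obtain x where x: "x \<in> strategy_profiles N q E"
    and equilibrium: "\<And>k y. k < N \<Longrightarrow> y \<in> strategy_profiles N q E \<Longrightarrow>
      profile_payoff N (4^q) (coeffA N q E \<rho> L M a) k (deviate fst k x y) \<le>
      profile_payoff N (4^q) (coeffA N q E \<rho> L M a) k x"
    using strategy_profiles_equilibrium[OF assms(4)] by blast
  show ?thesis
  proof (intro exI[of _ "decode (4^q) x"] conjI allI impI ballI)
    fix k
    assume "k < N"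
    with x show "decode (4^q) x k \<in> strategies q E"
      by (rule decode_strategy_profile)
  next
    fix k \<chi>'
    assume "k < N" "\<chi>' \<in> strategies q E"
    with equilibrium[OF \<open>k < N\<close> encode_strategy_profile[OF \<open>\<chi>' \<in> strategies q E\<close>]]
    show "payoff N q E \<rho> L M a k ((decode (4^q) x)(k := \<chi>')) \<le>
        payoff N q E \<rho> L M a k (decode (4^q) x)"
      by (simp add: payoff_decode payoff_decode_update)
  qed
qed

end
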